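(* Consider the following two-stage zero-sum game between Alice (A) and Bob (B), with a constant $c\in(0,1/3)$. The initial state $X_1$ is uniform on $\{-1,+1\}$; Alice observes $X_1$, Bob observes nothing. At stage 1 Alice chooses $U_1^A\in\{-1,+1\}$ and $X_2=X_1U_1^A$. At stage 2 Bob, observing only $U_1^A$, chooses $U_2^B\in\{\mathrm{U},\mathrm{D}\}$. Alice's rewards are $R_1^A=c$ if $U_1^A=+1$ and $0$ if $U_1^A=-1$; $R_2^A=2$ if $X_2=+1,U_2^B=\mathrm{U}$, $R_2^A=1$ if $X_2=-1,U_2^B=\mathrm{D}$, and $R_2^A=0$ otherwise; Bob's rewards are $R_t^B=-R_t^A$. Then no belief-based equilibrium exists in this game.
   Context: A behavioral strategy profile consists of Alice's map $g_1^A:\{-1,+1\}\to\Delta(\{-1,+1\})$ from $X_1$ to a mixed action and Bob's map $g_2^B:\{-1,+1\}\to\Delta(\{\mathrm{U},\mathrm{D}\})$ from $U_1^A$ to a mixed action; payoffs are expected total rewards; a Bayes–Nash equilibrium (BNE) is a profile where neither player can increase their expected payoff by unilaterally changing strategy. For a profile $g$ and each $u\in\{-1,+1\}$ with $\Pr^g(U_1^A=u)>0$, let $\pi_2^u\in\Delta(\{-1,+1\})$ be the common-information-based belief $\pi_2^u(x)=\Pr^g(X_2=x\mid U_1^A=u)$. A belief-based equilibrium is a BNE $g$ for which there exists a function $\sigma:\Delta(\{-1,+1\})\to\Delta(\{\mathrm{U},\mathrm{D}\})$ with $g_2^B(u)=\sigma(\pi_2^u)$ for every $u$ with $\Pr^g(U_1^A=u)>0$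 (i.e. Bob's stage-2 mixed action depends on his information only through the belief on $X_2$; Bob has no private information, and Alice's stage-1 common-information belief is the fixed prior, so Alice's strategy is unrestricted). *)

theory Defs
  imports "HOL-Probability.Probability"
begin

datatype pm = Minus | Plus

text \<open>Multiplication on {-1,+1}: X2 = X1 * U1.\<close>
definition pm_mul :: "pm \<Rightarrow> pm \<Rightarrow> pm" where
  "pm_mul a b = (if a = b then Plus else Minus)"

datatype bact = Up | Down

definition rewA1 :: "real \<Rightarrow> pm \<Rightarrow> real" where
  "rewA1 c u = (if u = Plus then c else 0)"

definition rewA2 :: "pm \<Rightarrow> bact \<Rightarrow> real" where
  "rewA2 x b = (if x = Plus \<and> b = Up then 2 else if x = Minus \<and> b = Down then 1 else 0)"

definition joint :: "(pm \<Rightarrow> pm pmf) \<Rightarrow> (pm \<Rightarrow> bact pmf) \<Rightarrow> (pm \<times> pm \<times> bact) pmf" where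
  "joint g1 g2 =
     bind_pmf (pmf_of_set {Minus, Plus}) (\<lambda>x1.
     bind_pmf (g1 x1) (\<lambda>u.
     bind_pmf (g2 u) (\<lambda>b. return_pmf (x1, u, b))))"

definition payA :: "real \<Rightarrow> (pm \<Rightarrow> pm pmf) \<Rightarrow> (pm \<Rightarrow> bact pmf) \<Rightarrow> real" where
  "payA c g1 g2 = measure_pmf.expectation (joint g1 g2)
      (\<lambda>(x1, u, b). rewA1 c u + rewA2 (pm_mul x1 u) b)"

definition payB :: "real \<Rightarrow> (pm \<Rightarrow> pm pmf) \<Rightarrow> (pm \<Rightarrow> bact pmf) \<Rightarrow> real" where
  "payB c g1 g2 = measure_pmf.expectation (joint g1 g2)
      (\<lambda>(x1, u, b). - (rewA1 c u + rewA2 (pm_mul x1 u) b))"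

definition is_BNE :: "real \<Rightarrow> (pm \<Rightarrow> pm pmf) \<Rightarrow> (pm \<Rightarrow> bact pmf) \<Rightarrow> bool" where
  "is_BNE c g1 g2 \<longleftrightarrow>
     (\<forall>g1'. payA c g1' g2 \<le> payA c g1 g2) \<and> (\<forall>g2'. payB c g1 g2' \<le> payB c g1 g2)"

definition probU :: "(pm \<Rightarrow> pm pmf) \<Rightarrow> (pm \<Rightarrow> bact pmf) \<Rightarrow> pm \<Rightarrow> real" where
  "probU g1 g2 u = measure_pmf.prob (joint g1 g2) {\<omega>. fst (snd \<omega>) = u}"

definition belief2 :: "(pm \<Rightarrow> pm pmf) \<Rightarrow> (pm \<Rightarrow> bact pmf) \<Rightarrow> pm \<Rightarrow> pm pmf" where
  "belief2 g1 g2 u = map_pmf (\<lambda>(x1, u', b). pm_mul x1 u')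
      (cond_pmf (joint g1 g2) {\<omega>. fst (snd \<omega>) = u})"

definition belief_based_eq :: "real \<Rightarrow> (pm \<Rightarrow> pm pmf) \<Rightarrow> (pm \<Rightarrow> bact pmf) \<Rightarrow> bool" where
  "belief_based_eq c g1 g2 \<longleftrightarrow> is_BNE c g1 g2 \<and>
     (\<exists>\<sigma> :: pm pmf \<Rightarrow> bact pmf. \<forall>u. probU g1 g2 u > 0 \<longrightarrow> g2 u = \<sigma> (belief2 g1 g2 u))"

end

theory Submission
  imports Defs
begin

(* Write p, q for the probabilities that Alice plays +1 at X1 = +1, -1 and a, b for the
   probabilities that Bob plays U after seeing +1, -1. Alice's payoff is affine in each of
   them separately, and the best-response conditions pin down a unique Bayes-Nash
   equilibrium: p = 1/3, q = 2/3, a = 1/3 - c, b = 1/3 + c. In it both actions of Alice are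
   equally likely and both lead to the same belief (X2 = +1 with probability 1/3), so a
   belief-based Bob would have to play the same mixed action after either, i.e. a = b,
   which contradicts c > 0. *)

lemma UNIV_pm: "(UNIV :: pm set) = {Minus, Plus}"
  using pm.exhaust by auto

lemma UNIV_bact: "(UNIV :: bact set) = {Up, Down}"
  using bact.exhaust by auto

instance pm :: finite
  by standard (simp add: UNIV_pm)

instance bact :: finite
  by standard (simp add: UNIV_bact)

lemma pmf_Minus: "pmf h Minus = 1 - pmf h Plus"
proof -
  have "sum (pmf h) UNIV = 1" by (rule sum_pmf_eq_1) auto
  then show ?thesis by (simp add: UNIV_pm)
qed

lemma pmf_Down: "pmf h Down = 1 - pmf h Up"
proof -
  have "sum (pmf h) UNIV = 1" by (rule sum_pmf_eq_1) auto
  then show ?thesis by (simp add: UNIV_bact)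
qed

lemma expectation_finite_pmf:
  "measure_pmf.expectation (M :: 'a::finite pmf) f = (\<Sum>a\<in>UNIV. pmf M a * f a)"
  by (subst integral_measure_pmf_real[of UNIV]) (auto simp: mult.commute)

lemma pmf_joint: "pmf (joint g1 g2) (x, u, b) = pmf (g1 x) u * pmf (g2 u) b / 2"
  by (cases x; cases u; cases b)
    (simp_all add: joint_def pmf_bind integral_pmf_of_set expectation_finite_pmf UNIV_pm UNIV_bact indicator_def)

definition alice_payoff :: "real \<Rightarrow> real \<Rightarrow> real \<Rightarrow> real \<Rightarrow> real \<Rightarrow> real" where
  "alice_payoff c p q a b =
     (p * (c + 2 * a) + (1 - p) * (1 - b) + q * (c + 1 - a) + (1 - q) * 2 * b) / 2"

lemma payA_eq_alice_payoff:
  "payA c g1 g2 = alice_payoff c (pmf (g1 Plus) Plus) (pmf (g1 Minus) Plus) (pmf (g2 Plus) Up) (pmf (g2 Minus) Up)"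
  unfolding payA_def expectation_finite_pmf UNIV_Times_UNIV[symmetric]
  by (simp add: sum.cartesian_product[symmetric] UNIV_pm UNIV_bact pmf_joint pmf_Minus pmf_Down
      rewA1_def rewA2_def pm_mul_def alice_payoff_def field_simps)

lemma payB_eq_uminus_payA: "payB c g1 g2 = - payA c g1 g2"
  unfolding payB_def payA_def case_prod_unfold by (rule integral_minus)

lemma measure_joint_action:
  "measure_pmf.prob (joint g1 g2) (A \<times> {u} \<times> UNIV) = (\<Sum>x\<in>A. pmf (g1 x) u) / 2"
proof -
  have "measure_pmf.prob (joint g1 g2) (A \<times> {u} \<times> UNIV) =
      (\<Sum>x\<in>A. \<Sum>u'\<in>{u}. \<Sum>b\<in>UNIV. pmf (joint g1 g2) (x, u', b))"
    by (simp only: measure_measure_pmf_finite finite sum.cartesian_product split_def prod.collapse)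
  also have "\<dots> = (\<Sum>x\<in>A. pmf (g1 x) u * (\<Sum>b\<in>UNIV. pmf (g2 u) b) / 2)"
    by (simp add: pmf_joint sum_distrib_left sum_divide_distrib)
  also have "\<dots> = (\<Sum>x\<in>A. pmf (g1 x) u) / 2"
    by (simp add: sum_pmf_eq_1 sum_divide_distrib)
  finally show ?thesis .
qed

lemma measure_cond_pmf:
  assumes "set_pmf p \<inter> s \<noteq> {}"
  shows "measure_pmf.prob (cond_pmf p s) t = measure_pmf.prob p (s \<inter> t) / measure_pmf.prob p s"
  using emeasure_measure_pmf_not_zero[OF assms]
  by (simp add: cond_pmf.rep_eq[OF assms] measure_pmf.emeasure_eq_measure)

lemma action_event: "{\<omega> :: pm \<times> pm \<times> bact. fst (snd \<omega>) = u} = UNIV \<times> {u} \<times> UNIV"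
  by auto

lemma probU_eq: "probU g1 g2 u = (pmf (g1 Minus) u + pmf (g1 Plus) u) / 2"
  by (simp add: probU_def action_event measure_joint_action UNIV_pm)

lemma pm_mul_cancel_right: "pm_mul (pm_mul a u) u = a"
  by (cases a; cases u) (simp_all add: pm_mul_def)

lemma pm_mul_eq_iff: "pm_mul a u = x \<longleftrightarrow> a = pm_mul x u"
  using pm_mul_cancel_right by metis

lemma pmf_belief2:
  assumes "probU g1 g2 u > 0"
  shows "pmf (belief2 g1 g2 u) x = pmf (g1 (pm_mul x u)) u / (pmf (g1 Minus) u + pmf (g1 Plus) u)"
proof -
  let ?S = "{\<omega>. fst (snd \<omega>) = u}"
  have nonempty: "set_pmf (joint g1 g2) \<inter> ?S \<noteq> {}"
    using assms measure_pmf_zero_iff[of "joint g1 g2" ?S] unfolding probU_def by auto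
  have event: "?S \<inter> (\<lambda>(x1, u', b). pm_mul x1 u') -` {x} = {pm_mul x u} \<times> {u} \<times> UNIV"
    by (auto simp: pm_mul_eq_iff pm_mul_cancel_right)
  have "pmf (belief2 g1 g2 u) x =
      measure_pmf.prob (joint g1 g2) ({pm_mul x u} \<times> {u} \<times> UNIV) / probU g1 g2 u"
    unfolding belief2_def pmf_map measure_cond_pmf[OF nonempty] event probU_def ..
  then show ?thesis
    by (simp add: measure_joint_action probU_eq)
qed

lemma unit_interval_maximizer_cases:
  fixes p D :: real
  assumes "0 \<le> p" "p \<le> 1" "0 \<le> p * D" "(1 - p) * D \<le> 0"
  shows "D = 0 \<or> (0 < D \<and> p = 1) \<or> (D < 0 \<and> p = 0)"
  using assms by (auto simp: zero_le_mult_iff mult_le_0_iff)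

lemma alice_payoff_equilibrium:
  assumes "0 < c" "c < 1/3"
    and "p \<in> {0..1}" "q \<in> {0..1}" "a \<in> {0..1}" "b \<in> {0..1}"
    and p_best: "\<And>p'. p' \<in> {0, 1} \<Longrightarrow> alice_payoff c p' q a b \<le> alice_payoff c p q a b"
    and q_best: "\<And>q'. q' \<in> {0, 1} \<Longrightarrow> alice_payoff c p q' a b \<le> alice_payoff c p q a b"
    and a_best: "\<And>a'. a' \<in> {0, 1} \<Longrightarrow> alice_payoff c p q a b \<le> alice_payoff c p q a' b"
    and b_best: "\<And>b'. b' \<in> {0, 1} \<Longrightarrow> alice_payoff c p q a b \<le> alice_payoff c p q a b'"
  shows "p = 1/3 \<and> q = 2/3 \<and> a = 1/3 - c \<and> b = 1/3 + c"
proof -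
  have "0 \<le> p * (c + 2 * a + b - 1)" "(1 - p) * (c + 2 * a + b - 1) \<le> 0"
    using p_best[of 0] p_best[of 1] by (simp_all add: alice_payoff_def field_simps)
  from unit_interval_maximizer_cases[OF _ _ this] assms(3)
  have p_cases: "c + 2 * a + b = 1 \<or> (1 < c + 2 * a + b \<and> p = 1) \<or> (c + 2 * a + b < 1 \<and> p = 0)"
    by auto
  have "0 \<le> q * (c + 1 - a - 2 * b)" "(1 - q) * (c + 1 - a - 2 * b) \<le> 0"
    using q_best[of 0] q_best[of 1] by (simp_all add: alice_payoff_def field_simps)
  from unit_interval_maximizer_cases[OF _ _ this] assms(4)
  have q_cases: "a + 2 * b = c + 1 \<or> (a + 2 * b < c + 1 \<and> q = 1) \<or> (c + 1 < a + 2 * b \<and> q = 0)"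
    by auto
  have "0 \<le> a * (q - 2 * p)" "(1 - a) * (q - 2 * p) \<le> 0"
    using a_best[of 0] a_best[of 1] by (simp_all add: alice_payoff_def field_simps)
  from unit_interval_maximizer_cases[OF _ _ this] assms(5)
  have a_cases: "q = 2 * p \<or> (2 * p < q \<and> a = 1) \<or> (q < 2 * p \<and> a = 0)"
    by auto
  have "0 \<le> b * (2 * q - 1 - p)" "(1 - b) * (2 * q - 1 - p) \<le> 0"
    using b_best[of 0] b_best[of 1] by (simp_all add: alice_payoff_def field_simps)
  from unit_interval_maximizer_cases[OF _ _ this] assms(6)
  have b_cases: "2 * q = 1 + p \<or> (1 + p < 2 * q \<and> b = 1) \<or> (2 * q < 1 + p \<and> b = 0)"
    by auto
  from p_cases q_cases a_cases b_cases show ?thesis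
    using assms(1-6) by (elim disjE conjE) auto
qed

lemma is_BNE_parameters:
  assumes "0 < c" "c < 1/3" and "is_BNE c g1 g2"
  shows "pmf (g1 Plus) Plus = 1/3 \<and> pmf (g1 Minus) Plus = 2/3 \<and>
         pmf (g2 Plus) Up = 1/3 - c \<and> pmf (g2 Minus) Up = 1/3 + c"
proof -
  have alice: "payA c g1' g2 \<le> payA c g1 g2" for g1'
    using assms(3) by (simp add: is_BNE_def)
  have bob: "payA c g1 g2 \<le> payA c g1 g2'" for g2'
    using assms(3) by (simp add: is_BNE_def payB_eq_uminus_payA)
  show ?thesis
    using alice[of "g1(Plus := return_pmf Plus)"] alice[of "g1(Plus := return_pmf Minus)"]
      alice[of "g1(Minus := return_pmf Plus)"] alice[of "g1(Minus := return_pmf Minus)"]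
      bob[of "g2(Plus := return_pmf Up)"] bob[of "g2(Plus := return_pmf Down)"]
      bob[of "g2(Minus := return_pmf Up)"] bob[of "g2(Minus := return_pmf Down)"]
    by (intro alice_payoff_equilibrium[OF assms(1,2)]) (auto simp: payA_eq_alice_payoff pmf_le_1)
qed

theorem proposition3:
  fixes c :: real
  assumes "0 < c" and "c < 1/3"
  shows "\<not> (\<exists>g1 g2. belief_based_eq c g1 g2)"
proof
  assume "\<exists>g1 g2. belief_based_eq c g1 g2"
  then obtain g1 g2 \<sigma> where bne: "is_BNE c g1 g2"
    and \<sigma>: "\<And>u. probU g1 g2 u > 0 \<Longrightarrow> g2 u = \<sigma> (belief2 g1 g2 u)"
    unfolding belief_based_eq_def by blast
  from is_BNE_parameters[OF assms bne] assms(1)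
  have p: "pmf (g1 Plus) Plus = 1/3" and q: "pmf (g1 Minus) Plus = 2/3"
    and a_ne_b: "pmf (g2 Plus) Up \<noteq> pmf (g2 Minus) Up"
    by auto
  have probU_half: "probU g1 g2 u = 1/2" for u
    by (cases u) (simp_all add: probU_eq pmf_Minus p q)
  have "belief2 g1 g2 Plus = belief2 g1 g2 Minus"
  proof (rule pmf_eqI)
    show "pmf (belief2 g1 g2 Plus) x = pmf (belief2 g1 g2 Minus) x" for x
      by (cases x) (simp_all add: pmf_belief2 probU_half pm_mul_def pmf_Minus p q)
  qed
  then have "g2 Plus = g2 Minus"
    using \<sigma> probU_half by simp
  with a_ne_b show False
    by simp
qed

end
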